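(* Let $\Sigma$ be an alphabet with $n$ letters, let $\ell\notin\Sigma$, let $P=p_1p_2\cdots p_n$ be a permutation of $\Sigma$, and let $\pi:\ \pi_1<\pi_2<\cdots<\pi_{n+1}$ be a total ordering of $\Sigma\cup\{\ell\}$ with $\pi_1\neq \ell$. Define a sequence $\beta_1,\beta_2,\dots$ of elements of $\Sigma\cup\{\ell\}$ by $\beta_1=\pi_1$ and, whenever $\beta_j=p_x$ for some $x$ with $p_x<_\pi \min_\pi\{p_n,\ell\}$, by $$\beta_{j+1}=\min_\pi\{p_{x+1},\dots,p_n,\ell\};$$ the sequence stops at the first index $w$ with $\beta_w=\min_\pi\{p_n,\ell\}$. For $1\le j\le w$ let $S_j$ denote the lineage taxon string of the taxon $\beta_j$ in the line tree $T(P)$ under $\pi$. Then every $S_j$ is nonempty, and $$P = S_1[1,|S_1|-1]\,\beta_1\,S_2[1,|S_2|-1]\,\beta_2\cdots S_{w-1}[1,|S_{w-1}|-1]\,\beta_{w-1}\,S'_w,$$ where $$S'_w=\begin{cases} S_w & \text{if } \beta_w=\ell,\\ S_w[1,|S_w|-1]\,\beta_w & \text{if } \beta_w\neq\ell,\end{cases}$$ $S[1,|S|-1]$ denotes the string obtained from a nonempty string $S$ by deleting its last letter, and juxtaposition denotes concatenation.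
   Context: Line tree $T(P)$: for a permutation $P=p_1\cdots p_n$ of $\Sigma$ and a letter $\ell\notin\Sigma$, $T(P)$ is the rooted tree with leaf set $\Sigma\cup\{\ell\}$, internal nodes $r,v_1,\dots,v_n$, and directed edges $(r,v_1)$, $(v_i,v_{i+1})$ and $(v_i,p_i)$ for $1\le i\le n-1$, and $(v_n,p_n)$, $(v_n,\ell)$. The root $r$ has outdegree 1. Lineage taxon string (LTS): let $T$ be a rooted binary tree whose root has outdegree 1 and whose leaves are labeled bijectively by a taxon set $X$, and let $\pi$ be a total ordering of $X$. For a node $u$, $\min_\pi(u)$ is the $\pi$-smallest taxon among the leaves below or equal to $u$. Label the root with the $\pi$-smallest taxon of $X$, and label each non-root internal node $u$ (which has two children $u',u''$) with the $\pi$-larger of $\min_\pi(u')$ and $\min_\pi(u'')$. Each taxon $f$ is then the label of exactly one internal node $w_f$, and the leaf $f$ lies below $w_f$. The LTS of $f$ in $T$ under $\pi$ is the sequence of labels of the nodes strictly between $w_f$ and the leaf $f$ on the directed path from $w_f$ to $f$, listed in order from $w_f$ towards $f$ (it may be empty). For example, for $P=edabc$ and the ordering $a<b<c<d<e<\ell$, the LTSs of $a,b,c$ in $T(P)$ are $edb$, $c$, $\ell$, and those of $d,e,\ell$ are empty. *)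

theory Defs
  imports Main
begin

text \<open>A rooted binary tree whose root has outdegree 1 is represented by the binary
tree hanging below the root: the root r is implicit, and its unique child is the
top of the given btree. Nodes of the btree are addressed by positions
(paths from the top, False = left child, True = right child).\<close>

datatype 'a btree = Lf 'a | Nd "'a btree" "'a btree"

fun sub :: "'a btree \<Rightarrow> bool list \<Rightarrow> 'a btree" where
  "sub t [] = t"
| "sub (Nd l r) (b # p) = sub (if b then r else l) p"
| "sub (Lf a) (b # p) = Lf a"

fun pos :: "'a btree \<Rightarrow> bool list set" where
  "pos (Lf a) = {[]}"
| "pos (Nd l r) = insert [] (Cons False ` pos l \<union> Cons True ` pos r)"

fun leaves :: "'a btree \<Rightarrow> 'a set" where
  "leaves (Lf a) = {a}"
| "leaves (Nd l r) = leaves l \<union> leaves r"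

datatype node = Root | Inner "bool list"

definition is_internal :: "'a btree \<Rightarrow> node \<Rightarrow> bool" where
  "is_internal t v \<longleftrightarrow> v = Root \<or>
     (\<exists>p l r. v = Inner p \<and> p \<in> pos t \<and> sub t p = Nd l r)"

text \<open>A total ordering \<pi> of a finite set is given as a distinct list
pi = [\<pi>_1, ..., \<pi>_N]; x <_\<pi> y iff x occurs before y.\<close>

definition prec :: "'a list \<Rightarrow> 'a \<Rightarrow> 'a \<Rightarrow> bool" where
  "prec pi x y \<longleftrightarrow> (\<exists>i j. i < j \<and> j < length pi \<and> pi ! i = x \<and> pi ! j = y)"

definition pmin :: "'a list \<Rightarrow> 'a set \<Rightarrow> 'a" where
  "pmin pi S = (THE x. x \<in> S \<and> (\<forall>y\<in>S. y \<noteq> x \<longrightarrow> prec pi x y))"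

definition pmax2 :: "'a list \<Rightarrow> 'a \<Rightarrow> 'a \<Rightarrow> 'a" where
  "pmax2 pi a b = (if prec pi a b then b else a)"

fun label :: "'a list \<Rightarrow> 'a btree \<Rightarrow> node \<Rightarrow> 'a" where
  "label pi t Root = pmin pi (leaves t)"
| "label pi t (Inner p) =
     (case sub t p of
        Nd l r \<Rightarrow> pmax2 pi (pmin pi (leaves l)) (pmin pi (leaves r))
      | Lf a \<Rightarrow> a)"

definition leafpos :: "'a btree \<Rightarrow> 'a \<Rightarrow> bool list" where
  "leafpos t f = (THE p. p \<in> pos t \<and> sub t p = Lf f)"

definition wnode :: "'a list \<Rightarrow> 'a btree \<Rightarrow> 'a \<Rightarrow> node" where
  "wnode pi t f = (THE v. is_internal t v \<and> label pi t v = f)"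

text \<open>The LTS of f: labels of the nodes strictly between w_f and the leaf f on the
directed path from w_f to f, in order from w_f towards f. The nodes of the btree on
the path from the top to the leaf at position q are those at positions take k q,
k = 0..length q; the root lies above all of them.\<close>
definition lts :: "'a list \<Rightarrow> 'a btree \<Rightarrow> 'a \<Rightarrow> 'a list" where
  "lts pi t f =
     (let q = leafpos t f in
      case wnode pi t f of
        Root \<Rightarrow> map (\<lambda>k. label pi t (Inner (take k q))) [0..<length q]
      | Inner p \<Rightarrow> map (\<lambda>k. label pi t (Inner (take k q))) [Suc (length p)..<length q])"

text \<open>T(P): r -> v_1, v_i -> v_{i+1}, v_i -> p_i, v_n -> p_n, v_n -> l.
Below the root this is Nd (Lf p_1) (Nd (Lf p_2) ... (Nd (Lf p_n) (Lf l))).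
(Only meaningful for nonempty P.)\<close>
fun line_tree :: "'a list \<Rightarrow> 'a \<Rightarrow> 'a btree" where
  "line_tree [] l = Lf l"
| "line_tree (p # ps) l = Nd (Lf p) (line_tree ps l)"

text \<open>bs = [\<beta>_1, ..., \<beta>_w] (0-indexed). P ! (x - 1) = p_x and
set (drop x P) = {p_{x+1}, ..., p_n}.\<close>
definition beta_seq :: "'a list \<Rightarrow> 'a list \<Rightarrow> 'a \<Rightarrow> 'a list \<Rightarrow> bool" where
  "beta_seq pi P l bs \<longleftrightarrow>
     (let m = pmin pi {last P, l} in
      bs \<noteq> [] \<and> hd bs = hd pi \<and> last bs = m \<and>
      (\<forall>j < length bs - 1. bs ! j \<noteq> m \<and>
         (\<exists>x. 1 \<le> x \<and> x \<le> length P \<and> bs ! j = P ! (x - 1) \<and> prec pi (bs ! j) m \<and>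
              bs ! (j + 1) = pmin pi (set (drop x P) \<union> {l}))))"

end

theory Submission
  imports Defs
begin

text \<open>Write \<open>M\<^sub>s\<close> for the \<open>\<pi>\<close>-minimum of \<open>{p\<^sub>s\<^sub>+\<^sub>1, \<dots>, p\<^sub>n, \<ell>}\<close>, the leaf set
of the subtree of \<open>T(P)\<close> below \<open>v\<^sub>s\<^sub>+\<^sub>1\<close>. The node \<open>v\<^sub>k\<^sub>+\<^sub>1\<close> is labelled with the
\<open>\<pi>\<close>-larger of \<open>p\<^sub>k\<^sub>+\<^sub>1\<close> and \<open>M\<^sub>k\<^sub>+\<^sub>1\<close>. Hence if \<open>\<beta> = M\<^sub>s = p\<^sub>j\<close> is a new suffix
minimum (\<open>s = 0\<close> or \<open>p\<^sub>s <\<^sub>\<pi> M\<^sub>s\<close>), then \<open>\<beta>\<close> labels \<open>v\<^sub>s\<close> (the root if \<open>s = 0\<close>),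
the nodes \<open>v\<^sub>s\<^sub>+\<^sub>1, \<dots>, v\<^sub>j\<^sub>-\<^sub>1\<close> on the path to its leaf are labelled
\<open>p\<^sub>s\<^sub>+\<^sub>1, \<dots>, p\<^sub>j\<^sub>-\<^sub>1\<close> because the suffix minimum does not change there, and \<open>v\<^sub>j\<close>
is labelled \<open>M\<^sub>j\<close>, the next element of the \<open>\<beta>\<close>-sequence. So the LTS of \<open>\<beta>\<close> with its last
letter replaced by \<open>\<beta>\<close> is the block \<open>p\<^sub>s\<^sub>+\<^sub>1 \<cdots> p\<^sub>j\<close> of \<open>P\<close>, and these blocks tile \<open>P\<close>.\<close>

lemma successively_iff_nth:
  "successively R xs \<longleftrightarrow> (\<forall>i < length xs - 1. R (xs ! i) (xs ! Suc i))"
  by (induction R xs rule: successively.induct) (auto simp: nth_Cons' less_Suc_eq_0_disj)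

lemma map_nth_upt_butlast:
  "map (\<lambda>j. f (xs ! j)) [0..<length xs - 1] = map f (butlast xs)"
  by (rule nth_equalityI) (auto simp: nth_butlast)

lemma drop_eq_map_nth_append:
  "s \<le> x \<Longrightarrow> x \<le> length xs \<Longrightarrow> drop s xs = map ((!) xs) [s..<x] @ drop x xs"
  by (rule nth_equalityI) (auto simp: nth_append add.commute)

lemma in_set_drop_conv_nth:
  "y \<in> set (drop s xs) \<longleftrightarrow> (\<exists>k. s \<le> k \<and> k < length xs \<and> y = xs ! k)"
  by (auto simp: in_set_conv_nth)
    (metis add.commute le_add2 less_diff_conv, metis add_diff_inverse_nat diff_less_mono linorder_not_le)

lemma distinct_nth_in_set_drop_iff:
  "distinct xs \<Longrightarrow> k < length xs \<Longrightarrow> xs ! k \<in> set (drop s xs) \<longleftrightarrow> s \<le> k"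
  by (auto simp: in_set_drop_conv_nth nth_eq_iff_index_eq)

definition rank :: "'a list \<Rightarrow> 'a \<Rightarrow> nat" where
  "rank pi x = (THE i. i < length pi \<and> pi ! i = x)"

lemma rank_nth: "distinct pi \<Longrightarrow> i < length pi \<Longrightarrow> rank pi (pi ! i) = i"
  unfolding rank_def by (rule the_equality) (auto simp: nth_eq_iff_index_eq)

lemma nth_rank: "distinct pi \<Longrightarrow> x \<in> set pi \<Longrightarrow> pi ! rank pi x = x"
  by (metis in_set_conv_nth rank_nth)

lemma rank_eq_iff:
  "distinct pi \<Longrightarrow> x \<in> set pi \<Longrightarrow> y \<in> set pi \<Longrightarrow> rank pi x = rank pi y \<longleftrightarrow> x = y"
  by (metis nth_rank)

lemma prec_iff_rank_less:
  assumes "distinct pi"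
  shows "prec pi x y \<longleftrightarrow> x \<in> set pi \<and> y \<in> set pi \<and> rank pi x < rank pi y"
proof
  assume "prec pi x y"
  then obtain i j where "i < j" "j < length pi" "pi ! i = x" "pi ! j = y"
    unfolding prec_def by blast
  then show "x \<in> set pi \<and> y \<in> set pi \<and> rank pi x < rank pi y"
    using assms rank_nth[of pi i] rank_nth[of pi j] by auto
next
  assume "x \<in> set pi \<and> y \<in> set pi \<and> rank pi x < rank pi y"
  then show "prec pi x y"
    unfolding prec_def using assms nth_rank[of pi] in_set_conv_nth rank_nth by metis
qed

lemma pmin_least:
  assumes "distinct pi" "finite S" "S \<noteq> {}" "S \<subseteq> set pi"
  shows "pmin pi S \<in> S \<and> (\<forall>y\<in>S. rank pi (pmin pi S) \<le> rank pi y)"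
proof -
  obtain x where x: "x \<in> S" "\<forall>y\<in>S. rank pi x \<le> rank pi y"
    using ex_min_if_finite[of "rank pi ` S"] assms(2,3) by fastforce
  have below: "prec pi x y" if "y \<in> S" "y \<noteq> x" for y
  proof -
    have "rank pi x \<noteq> rank pi y"
      using that x(1) assms(4) rank_eq_iff[OF assms(1)] by blast
    then show ?thesis
      using that x assms(4) prec_iff_rank_less[OF assms(1)] by fastforce
  qed
  have "pmin pi S = x"
    unfolding pmin_def
  proof (rule the_equality)
    fix z assume z: "z \<in> S \<and> (\<forall>y\<in>S. y \<noteq> z \<longrightarrow> prec pi z y)"
    show "z = x"
    proof (rule ccontr)
      assume "z \<noteq> x"
      then have "prec pi z x" "prec pi x z"
        using z x(1) below by auto
      then show False
        by (simp add: prec_iff_rank_less[OF assms(1)])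
    qed
  qed (use x below in auto)
  with x show ?thesis by simp
qed

lemma pmax2_eq_rank:
  "distinct pi \<Longrightarrow> a \<in> set pi \<Longrightarrow> b \<in> set pi \<Longrightarrow>
    pmax2 pi a b = (if rank pi a < rank pi b then b else a)"
  by (simp add: pmax2_def prec_iff_rank_less)

lemma sub_line_tree_spine:
  "k \<le> length P \<Longrightarrow> sub (line_tree P l) (replicate k True) = line_tree (drop k P) l"
proof (induction P arbitrary: k)
  case (Cons a P) then show ?case by (cases k) auto
qed simp

lemma sub_line_tree_leaf:
  "k < length P \<Longrightarrow> sub (line_tree P l) (replicate k True @ [False]) = Lf (P ! k)"
proof (induction P arbitrary: k)
  case (Cons a P) then show ?case by (cases k) auto
qed simp

lemma pos_line_tree:
  "pos (line_tree P l) =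
     (\<lambda>k. replicate k True) ` {..length P} \<union> (\<lambda>k. replicate k True @ [False]) ` {..<length P}"
  by (induction P) (auto simp: atMost_Suc_eq_insert_0 lessThan_Suc_eq_insert_0 image_image)

lemma leaves_line_tree: "leaves (line_tree P l) = set P \<union> {l}"
  by (induction P) auto

lemma line_tree_eq_Lf_iff: "line_tree xs l = Lf x \<longleftrightarrow> xs = [] \<and> x = l"
  by (cases xs) auto

declare label.simps [simp del]

subsection \<open>Suffix minima and the labels of a line tree\<close>

locale line_tree_order =
  fixes pi :: "'a list" and P :: "'a list" and l :: 'a
  assumes distinct_pi: "distinct pi" and distinct_P: "distinct P" and l_notin_P: "l \<notin> set P"
    and set_pi: "set pi = set P \<union> {l}"
begin

abbreviation "n \<equiv> length P"
abbreviation "T \<equiv> line_tree P l"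
abbreviation "r \<equiv> rank pi"

text \<open>\<open>spine k\<close> is the node \<open>v\<^sub>k\<^sub>+\<^sub>1\<close> and \<open>suffix_min s\<close> is \<open>M\<^sub>s\<close>
(positions in \<open>P\<close> are 0-based).\<close>

abbreviation spine :: "nat \<Rightarrow> node" where
  "spine k \<equiv> Inner (replicate k True)"

definition suffix_min :: "nat \<Rightarrow> 'a" where
  "suffix_min s = pmin pi (set (drop s P) \<union> {l})"

definition new_suffix_min :: "nat \<Rightarrow> bool" where
  "new_suffix_min s \<longleftrightarrow> s = 0 \<or> prec pi (P ! (s - 1)) (suffix_min s)"

definition suffix_min_node :: "nat \<Rightarrow> node" where
  "suffix_min_node s = (if s = 0 then Root else spine (s - 1))"

lemma nth_in_pi: "k < n \<Longrightarrow> P ! k \<in> set pi"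
  using set_pi by auto

lemma l_in_pi: "l \<in> set pi"
  using set_pi by auto

lemma suffix_min_least:
  "suffix_min s \<in> set (drop s P) \<union> {l} \<and> (\<forall>y \<in> set (drop s P) \<union> {l}. r (suffix_min s) \<le> r y)"
  unfolding suffix_min_def
  by (rule pmin_least[OF distinct_pi]) (auto simp: set_pi dest: in_set_dropD)

lemma suffix_min_mem: "suffix_min s \<in> set (drop s P) \<union> {l}"
  using suffix_min_least by blast

lemma suffix_min_le: "y \<in> set (drop s P) \<union> {l} \<Longrightarrow> r (suffix_min s) \<le> r y"
  using suffix_min_least by blast

lemma suffix_min_in_pi: "suffix_min s \<in> set pi"
  using suffix_min_mem[of s] set_pi by (auto dest: in_set_dropD)

lemma nth_ne_l: "k < n \<Longrightarrow> P ! k \<noteq> l"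
  using l_notin_P nth_mem by blast

lemma nth_in_drop_iff: "k < n \<Longrightarrow> P ! k \<in> set (drop s P) \<longleftrightarrow> s \<le> k"
  by (rule distinct_nth_in_set_drop_iff[OF distinct_P])

lemma nth_in_suffix_iff: "k < n \<Longrightarrow> P ! k \<in> set (drop s P) \<union> {l} \<longleftrightarrow> s \<le> k"
  using nth_in_drop_iff nth_ne_l by simp

lemma suffix_min_mono: "s \<le> s' \<Longrightarrow> r (suffix_min s) \<le> r (suffix_min s')"
  using suffix_min_le suffix_min_mem[of s'] set_drop_subset_set_drop[of s s' P] by blast

lemma suffix_min_eq:
  assumes "s \<le> s'" "suffix_min s \<in> set (drop s' P) \<union> {l}"
  shows "suffix_min s' = suffix_min s"
  using suffix_min_le[OF assms(2)] suffix_min_mono[OF assms(1)]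
    rank_eq_iff[OF distinct_pi suffix_min_in_pi suffix_min_in_pi] by simp

lemma suffix_min_nth_le: "suffix_min s = P ! j \<Longrightarrow> j < n \<Longrightarrow> s \<le> j"
  using suffix_min_mem nth_in_suffix_iff by metis

lemma suffix_min_0: "suffix_min 0 = hd pi"
proof -
  have "pi \<noteq> []"
    using l_in_pi by auto
  then have pi: "pi \<noteq> []" "hd pi \<in> set pi"
    by simp_all
  have "r (hd pi) = 0"
    using rank_nth[OF distinct_pi, of 0] pi by (simp add: hd_conv_nth)
  then have "r (suffix_min 0) = r (hd pi)"
    using suffix_min_le[of "hd pi" 0] pi set_pi by simp
  then show ?thesis
    using rank_eq_iff[OF distinct_pi suffix_min_in_pi pi(2)] by simp
qed

lemma label_root: "label pi T Root = suffix_min 0"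
  by (simp add: suffix_min_def leaves_line_tree label.simps)

lemma sub_spine: "k < n \<Longrightarrow> sub T (replicate k True) = Nd (Lf (P ! k)) (line_tree (drop (Suc k) P) l)"
  using sub_line_tree_spine[of k P l] Cons_nth_drop_Suc[of k P] by (metis less_imp_le line_tree.simps(2))

lemma label_spine:
  assumes "k < n"
  shows "label pi T (spine k) =
    (if r (P ! k) < r (suffix_min (Suc k)) then suffix_min (Suc k) else P ! k)"
proof -
  have "pmin pi (leaves (line_tree (drop (Suc k) P) l)) = suffix_min (Suc k)"
    by (simp add: suffix_min_def leaves_line_tree)
  moreover have "pmin pi {P ! k} = P ! k"
    using pmin_least[OF distinct_pi, of "{P ! k}"] nth_in_pi[OF assms] by simp
  ultimately show ?thesis
    using assms nth_in_pi[OF assms]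
    by (simp add: label.simps sub_spine pmax2_eq_rank[OF distinct_pi] suffix_min_in_pi)
qed

lemma is_internal_iff: "is_internal T v \<longleftrightarrow> v = Root \<or> (\<exists>k<n. v = spine k)"
  unfolding is_internal_def
  by (auto simp: pos_line_tree sub_line_tree_spine sub_line_tree_leaf line_tree_eq_Lf_iff)
    (metis Cons_nth_drop_Suc line_tree.simps(2))

lemma label_spine_mem: "k < n \<Longrightarrow> label pi T (spine k) \<in> set (drop k P) \<union> {l}"
  using suffix_min_mem[of "Suc k"] set_drop_subset_set_drop[of k "Suc k" P] nth_in_suffix_iff[of k k]
  by (auto simp: label_spine)

lemma nth_ne_suffix_min_Suc: "k < n \<Longrightarrow> P ! k \<noteq> suffix_min (Suc k)"
  using suffix_min_mem[of "Suc k"] nth_in_suffix_iff[of k "Suc k"] by auto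

lemma label_spine_ne_suffix_min:
  assumes k: "k < n" and "j \<le> k"
  shows "label pi T (spine k) \<noteq> suffix_min j"
proof
  assume "label pi T (spine k) = suffix_min j"
  then have eq: "suffix_min k = label pi T (spine k)"
    using suffix_min_eq[OF \<open>j \<le> k\<close>] label_spine_mem[OF k] by simp
  have le: "r (suffix_min k) \<le> r (P ! k)" "r (suffix_min k) \<le> r (suffix_min (Suc k))"
    using nth_in_suffix_iff[OF k] suffix_min_le suffix_min_mono by auto
  show False
  proof (cases "r (P ! k) < r (suffix_min (Suc k))")
    case True
    then show False
      using eq le by (simp add: label_spine[OF k])
  next
    case False
    then have "r (P ! k) = r (suffix_min (Suc k))"
      using eq le by (simp add: label_spine[OF k])
    then show False
      using nth_ne_suffix_min_Suc[OF k] rank_eq_iff[OF distinct_pi nth_in_pi[OF k] suffix_min_in_pi]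
      by simp
  qed
qed

lemma label_spine_neq:
  assumes "j < k" "k < n"
  shows "label pi T (spine j) \<noteq> label pi T (spine k)"
proof (cases "r (P ! j) < r (suffix_min (Suc j))")
  case True
  then show ?thesis
    using label_spine_ne_suffix_min[of k "Suc j"] assms by (simp add: label_spine)
next
  case False
  have "P ! j \<notin> set (drop k P) \<union> {l}"
    using nth_in_suffix_iff[of j k] assms by simp
  then show ?thesis
    using False label_spine_mem[OF assms(2)] assms by (auto simp: label_spine)
qed

lemma label_inj_on_internal:
  assumes "is_internal T v" "is_internal T w" "label pi T v = label pi T w"
  shows "v = w"
proof -
  have "label pi T (spine k) \<noteq> label pi T Root" if "k < n" for k
    using label_spine_ne_suffix_min[OF that, of 0] label_root by simp
  moreover have "j = k" if "j < n" "k < n" "label pi T (spine j) = label pi T (spine k)" for j k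
    using that label_spine_neq by (metis linorder_neqE_nat)
  ultimately show ?thesis
    using assms unfolding is_internal_iff by metis
qed

lemma new_suffix_min_Suc:
  assumes "suffix_min s = P ! j" "j < n"
  shows "new_suffix_min (Suc j)"
proof -
  have "r (P ! j) \<le> r (suffix_min (Suc j))"
    using assms suffix_min_mono[of s "Suc j"] suffix_min_nth_le by fastforce
  then have "r (P ! j) < r (suffix_min (Suc j))"
    using nth_ne_suffix_min_Suc[OF assms(2)]
      rank_eq_iff[OF distinct_pi nth_in_pi[OF assms(2)] suffix_min_in_pi] by (simp add: order_less_le)
  then show ?thesis
    using nth_in_pi[OF assms(2)] suffix_min_in_pi
    by (simp add: new_suffix_min_def prec_iff_rank_less[OF distinct_pi])
qed

lemma label_suffix_min_node:
  assumes "s \<le> n" "new_suffix_min s"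
  shows "is_internal T (suffix_min_node s) \<and> label pi T (suffix_min_node s) = suffix_min s"
proof (cases "s = 0")
  case True
  then show ?thesis
    by (simp add: suffix_min_node_def is_internal_iff label_root)
next
  case False
  then have "r (P ! (s - 1)) < r (suffix_min s)"
    using assms(2) by (simp add: new_suffix_min_def prec_iff_rank_less[OF distinct_pi])
  with False assms(1) show ?thesis
    by (auto simp: suffix_min_node_def is_internal_iff label_spine)
qed

lemma wnode_suffix_min:
  "s \<le> n \<Longrightarrow> new_suffix_min s \<Longrightarrow> wnode pi T (suffix_min s) = suffix_min_node s"
  unfolding wnode_def
  by (rule the_equality) (use label_suffix_min_node label_inj_on_internal in metis)+

lemma leafpos_nth: "k < n \<Longrightarrow> leafpos T (P ! k) = replicate k True @ [False]"
  unfolding leafpos_def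
  by (rule the_equality)
    (auto simp: pos_line_tree sub_line_tree_leaf sub_line_tree_spine line_tree_eq_Lf_iff
      nth_eq_iff_index_eq[OF distinct_P] nth_ne_l nth_ne_l[symmetric])

lemma leafpos_l: "leafpos T l = replicate n True"
  unfolding leafpos_def
  by (rule the_equality)
    (auto simp: pos_line_tree sub_line_tree_leaf sub_line_tree_spine line_tree_eq_Lf_iff
      nth_ne_l[symmetric])

lemma lts_eq_map_label:
  "wnode pi T f = suffix_min_node s \<Longrightarrow>
    lts pi T f = map (\<lambda>k. label pi T (Inner (take k (leafpos T f)))) [s..<length (leafpos T f)]"
  by (simp add: lts_def Let_def suffix_min_node_def split: if_splits)

lemma label_spine_eq_nth:
  assumes "s \<le> k" "k < n" "suffix_min s \<in> set (drop (Suc k) P) \<union> {l}"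
  shows "label pi T (spine k) = P ! k"
proof -
  have "suffix_min (Suc k) = suffix_min s"
    using suffix_min_eq assms by simp
  moreover have "r (suffix_min s) \<le> r (P ! k)"
    using suffix_min_le nth_in_suffix_iff assms by simp
  ultimately show ?thesis
    using assms(2) by (simp add: label_spine)
qed

lemma lts_suffix_min_nth:
  assumes s: "s \<le> n" "new_suffix_min s" and j: "suffix_min s = P ! j" "j < n"
  shows "lts pi T (suffix_min s) = map ((!) P) [s..<j] @ [suffix_min (Suc j)]"
proof -
  have "s \<le> j"
    using suffix_min_nth_le j by simp
  have "map (\<lambda>k. label pi T (Inner (take k (replicate j True @ [False])))) [s..<j] = map ((!) P) [s..<j]"
    using j by (intro map_cong) (auto intro!: label_spine_eq_nth simp: nth_in_drop_iff)
  moreover have "label pi T (spine j) = suffix_min (Suc j)"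
    using new_suffix_min_Suc[OF j] j(2)
    by (simp add: label_spine new_suffix_min_def prec_iff_rank_less[OF distinct_pi])
  moreover have "leafpos T (suffix_min s) = replicate j True @ [False]"
    using j leafpos_nth by simp
  ultimately show ?thesis
    using \<open>s \<le> j\<close> by (simp add: lts_eq_map_label[OF wnode_suffix_min[OF s]])
qed

lemma lts_suffix_min_l:
  assumes s: "s \<le> n" "new_suffix_min s" and "suffix_min s = l"
  shows "lts pi T (suffix_min s) = drop s P"
proof -
  have "leafpos T (suffix_min s) = replicate n True"
    using assms(3) leafpos_l by simp
  moreover have "map (\<lambda>k. label pi T (Inner (take k (replicate n True)))) [s..<n] = map ((!) P) [s..<n]"
    using assms(3) by (intro map_cong) (auto intro!: label_spine_eq_nth)
  ultimately show ?thesis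
    using drop_eq_map_nth_append[OF s(1) order_refl]
    by (simp add: lts_eq_map_label[OF wnode_suffix_min[OF s]])
qed

subsection \<open>The \<open>\<beta>\<close>-sequence\<close>

definition stop_taxon :: 'a where
  "stop_taxon = pmin pi {last P, l}"

definition beta_step :: "'a \<Rightarrow> 'a \<Rightarrow> bool" where
  "beta_step a b \<longleftrightarrow> a \<noteq> stop_taxon \<and>
     (\<exists>x. 1 \<le> x \<and> x \<le> n \<and> a = P ! (x - 1) \<and> prec pi a stop_taxon \<and> b = suffix_min x)"

lemma beta_seq_iff_successively:
  "beta_seq pi P l bs \<longleftrightarrow>
    bs \<noteq> [] \<and> hd bs = hd pi \<and> last bs = stop_taxon \<and> successively beta_step bs"
  by (simp add: beta_seq_def Let_def successively_iff_nth beta_step_def stop_taxon_def suffix_min_def)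

lemma stop_taxon_least:
  assumes "P \<noteq> []"
  shows "stop_taxon \<in> {last P, l} \<and> r stop_taxon \<le> r (last P) \<and> r stop_taxon \<le> r l"
proof -
  have "{last P, l} \<subseteq> set pi"
    using assms set_pi by auto
  then show ?thesis
    using pmin_least[OF distinct_pi, of "{last P, l}"] unfolding stop_taxon_def by simp
qed

lemma stop_taxon_in_pi: "P \<noteq> [] \<Longrightarrow> stop_taxon \<in> set pi"
  using stop_taxon_least l_in_pi set_pi by (metis insert_iff last_in_set singletonD Un_iff)

lemma stop_taxon_in_suffix:
  assumes "P \<noteq> []" "c < n" "P ! c \<noteq> stop_taxon"
  shows "stop_taxon \<in> set (drop (Suc c) P) \<union> {l}"
proof (cases "stop_taxon = l")
  case False
  then have "stop_taxon = P ! (n - 1)"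
    using stop_taxon_least[OF assms(1)] last_conv_nth[OF assms(1)] by simp
  moreover have "Suc c \<le> n - 1"
    using assms(2,3) calculation by (cases "c = n - 1") auto
  ultimately show ?thesis
    using nth_in_drop_iff[of "n - 1" "Suc c"] assms(1) by simp
qed simp

lemma beta_step_suffix_min:
  assumes "P \<noteq> []" "suffix_min s = P ! c" "c < n" "r (suffix_min s) < r stop_taxon"
  shows "beta_step (suffix_min s) (suffix_min (Suc c))"
  unfolding beta_step_def using assms
  by (intro conjI exI[of _ "Suc c"])
    (auto simp: prec_iff_rank_less[OF distinct_pi] nth_in_pi stop_taxon_in_pi[OF assms(1)])

lemma beta_chain_exists:
  assumes "P \<noteq> []" "s \<le> n" "r (suffix_min s) \<le> r stop_taxon"
  shows "\<exists>bs. bs \<noteq> [] \<and> hd bs = suffix_min s \<and> last bs = stop_taxon \<and> successively beta_step bs"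
  using assms(2,3)
proof (induction "n - s" arbitrary: s rule: less_induct)
  case less
  show ?case
  proof (cases "suffix_min s = stop_taxon")
    case True
    then show ?thesis by (intro exI[of _ "[stop_taxon]"]) simp
  next
    case False
    then have below_stop: "r (suffix_min s) < r stop_taxon"
      using less.prems(2) rank_eq_iff[OF distinct_pi suffix_min_in_pi stop_taxon_in_pi[OF assms(1)]]
      by (simp add: order_less_le)
    then have "suffix_min s \<noteq> l"
      using stop_taxon_least[OF assms(1)] by auto
    then obtain c where c: "s \<le> c" "c < n" "suffix_min s = P ! c"
      using suffix_min_mem[of s] by (auto simp: in_set_drop_conv_nth)
    then have "r (suffix_min (Suc c)) \<le> r stop_taxon" "n - Suc c < n - s"
      using suffix_min_le stop_taxon_in_suffix[OF assms(1)] False by auto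
    then obtain bs where bs: "bs \<noteq> []" "hd bs = suffix_min (Suc c)" "last bs = stop_taxon"
        "successively beta_step bs"
      using less.hyps[of "Suc c"] c(2) by auto
    then show ?thesis
      using beta_step_suffix_min[OF assms(1) c(3,2) below_stop]
      by (intro exI[of _ "suffix_min s # bs"]) (auto simp: successively_Cons)
  qed
qed

lemma lts_block_nth:
  assumes "s \<le> n" "new_suffix_min s" "suffix_min s = P ! j" "j < n"
  shows "lts pi T (suffix_min s) \<noteq> [] \<and>
    butlast (lts pi T (suffix_min s)) @ [suffix_min s] = map ((!) P) [s..<Suc j]"
  using lts_suffix_min_nth[OF assms] suffix_min_nth_le[OF assms(3,4)] assms(3) by simp

lemma lts_block_stop:
  assumes "P \<noteq> []" "s \<le> n" "new_suffix_min s" "suffix_min s = stop_taxon"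
  shows "lts pi T stop_taxon \<noteq> [] \<and>
    drop s P = (if stop_taxon = l then lts pi T stop_taxon else butlast (lts pi T stop_taxon) @ [stop_taxon])"
proof (cases "stop_taxon = l")
  case True
  txt \<open>If \<open>M\<^sub>n = \<ell>\<close> were new, then \<open>p\<^sub>n <\<^sub>\<pi> \<ell>\<close> and the stopping taxon would be \<open>p\<^sub>n\<close>.\<close>
  have "s \<noteq> n"
  proof
    assume "s = n"
    then have "r (P ! (n - 1)) < r l"
      using assms True by (simp add: new_suffix_min_def prec_iff_rank_less[OF distinct_pi])
    then show False
      using stop_taxon_least[OF assms(1)] True last_conv_nth[OF assms(1)] by simp
  qed
  then show ?thesis
    using lts_suffix_min_l[OF assms(2,3)] assms(2,4) True by simp
next
  case False
  then have "suffix_min s = P ! (n - 1)"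
    using stop_taxon_least[OF assms(1)] last_conv_nth[OF assms(1)] assms(4) by simp
  then show ?thesis
    using lts_block_nth[of s "n - 1"] drop_eq_map_nth_append[OF assms(2) order_refl] assms False
    by simp
qed

lemma beta_chain_decomposition:
  assumes "P \<noteq> []"
  shows "successively beta_step bs \<Longrightarrow> bs \<noteq> [] \<Longrightarrow> hd bs = suffix_min s \<Longrightarrow> last bs = stop_taxon \<Longrightarrow>
    s \<le> n \<Longrightarrow> new_suffix_min s \<Longrightarrow>
    (\<forall>b\<in>set bs. lts pi T b \<noteq> []) \<and>
    drop s P = concat (map (\<lambda>b. butlast (lts pi T b) @ [b]) (butlast bs)) @
      (if last bs = l then lts pi T (last bs) else butlast (lts pi T (last bs)) @ [last bs])"
proof (induction bs arbitrary: s)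
  case (Cons a bs)
  show ?case
  proof (cases "bs = []")
    case True
    then show ?thesis
      using lts_block_stop[OF assms] Cons.prems by auto
  next
    case False
    from Cons.prems False obtain x where x: "1 \<le> x" "x \<le> n" "suffix_min s = P ! (x - 1)"
        "hd bs = suffix_min x"
      by (auto simp: successively_Cons beta_step_def)
    then have "new_suffix_min x" "s \<le> x - 1"
      using new_suffix_min_Suc[of s "x - 1"] suffix_min_nth_le[of s "x - 1"] by simp_all
    then have "(\<forall>b\<in>set bs. lts pi T b \<noteq> []) \<and>
      drop x P = concat (map (\<lambda>b. butlast (lts pi T b) @ [b]) (butlast bs)) @
        (if last bs = l then lts pi T (last bs) else butlast (lts pi T (last bs)) @ [last bs])"
      using Cons.IH[of x] Cons.prems False x by (simp add: successively_Cons)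
    moreover have "lts pi T a \<noteq> [] \<and> butlast (lts pi T a) @ [a] = map ((!) P) [s..<x]"
      using lts_block_nth[of s "x - 1"] Cons.prems x by simp
    ultimately show ?thesis
      using drop_eq_map_nth_append[of s x P] \<open>s \<le> x - 1\<close> x False by simp
  qed
qed simp

end

theorem proposition1:
  fixes Sigma :: "'a set" and l :: 'a and P :: "'a list" and pi :: "'a list"
  assumes "finite Sigma"
    and "l \<notin> Sigma"
    and "distinct P" and "set P = Sigma"
    and "distinct pi" and "set pi = Sigma \<union> {l}"
    and "hd pi \<noteq> l"
  shows "(\<exists>bs. beta_seq pi P l bs) \<and>
    (\<forall>bs. beta_seq pi P l bs \<longrightarrow>
      (let w = length bs; S = (\<lambda>j. lts pi (line_tree P l) (bs ! j)) in
        (\<forall>j < w. S j \<noteq> []) \<and>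
        P = concat (map (\<lambda>j. butlast (S j) @ [bs ! j]) [0..<w - 1]) @
            (if bs ! (w - 1) = l then S (w - 1) else butlast (S (w - 1)) @ [bs ! (w - 1)])))"
proof -
  interpret line_tree_order pi P l
    using assms by unfold_locales auto
  have "P \<noteq> []"
  proof
    assume "P = []"
    then have "set pi = {l}"
      using assms(4,6) by simp
    then show False
      using assms(7) by (cases pi) auto
  qed
  have start: "hd pi = suffix_min 0" "new_suffix_min 0"
    by (simp_all add: suffix_min_0 new_suffix_min_def)
  show ?thesis
  proof (intro conjI allI impI)
    have "r (suffix_min 0) \<le> r stop_taxon"
      using suffix_min_le[of stop_taxon 0] stop_taxon_least[OF \<open>P \<noteq> []\<close>] \<open>P \<noteq> []\<close> by auto
    then show "\<exists>bs. beta_seq pi P l bs"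
      using beta_chain_exists[OF \<open>P \<noteq> []\<close>, of 0] start by (auto simp: beta_seq_iff_successively)
  next
    fix bs assume "beta_seq pi P l bs"
    then have "bs \<noteq> []" and
      "(\<forall>b\<in>set bs. lts pi T b \<noteq> []) \<and>
       drop 0 P = concat (map (\<lambda>b. butlast (lts pi T b) @ [b]) (butlast bs)) @
         (if last bs = l then lts pi T (last bs) else butlast (lts pi T (last bs)) @ [last bs])"
      using beta_chain_decomposition[OF \<open>P \<noteq> []\<close>, of bs 0] start
      by (auto simp: beta_seq_iff_successively)
    then show "let w = length bs; S = (\<lambda>j. lts pi (line_tree P l) (bs ! j)) in
        (\<forall>j < w. S j \<noteq> []) \<and>
        P = concat (map (\<lambda>j. butlast (S j) @ [bs ! j]) [0..<w - 1]) @
            (if bs ! (w - 1) = l then S (w - 1) else butlast (S (w - 1)) @ [bs ! (w - 1)])"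
      unfolding Let_def last_conv_nth[OF \<open>bs \<noteq> []\<close>] map_nth_upt_butlast[symmetric]
        all_set_conv_all_nth by simp
  qed
qed

end
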